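(* Let $\mu$ be a valuation on $\mathrm{Spec}(R)$ and $f\in R$, $f\ge0$. For every natural number $N\ge1$ and all rationals $r<s$ there exist rationals $r',s'$ with $r<r'<s'<s$ such that $\Delta[r',s']<\frac1N$.
   Context: $R$ is a Riesz space over $\mathbb{Q}$ with strong unit $1$; rationals identified with multiples of $1$. $\mathrm{Spec}(R)$ is the distributive lattice generated by $D(a)$, $a\in R$, subject to $D(1)=1$; $D(a)\wedge D(-a)=0$; $D(a+b)\le D(a)\vee D(b)$; $D(a)=0$ if $a\le0$; $D(a\vee b)=D(a)\vee D(b)$. A valuation is a map $\mu$ from $\mathrm{Spec}(R)$ to nonnegative lower reals (inhabited, downward closed, rounded sets of rationals) with $\mu(0)=0$, $\mu(1)=1$, $\mu(x)+\mu(y)=\mu(x\vee y)+\mu(x\wedge y)$, monotone, and $\mu(D(a))\le\bigvee_{\varepsilon>0}\mu(D(a-\varepsilon))$. $\Delta(r,s):=\mu(D(f-r)\wedge D(s-f))$, and $\Delta[r,s]$ is the upper real $1-\mu(D(r-f))-\mu(D(f-s))$; "$\Delta[r',s']<q$" means $q$ belongs to this upper real, i.e. there are rationals $a<\mu(D(r'-f))$, $b<\mu(D(f-s'))$ with $1-a-b<q$. *)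

theory Defs
  imports Main "HOL-Library.Lattice_Algebras"
begin

definition riesz_Q :: "(rat \<Rightarrow> 'a::lattice_ab_group_add \<Rightarrow> 'a) \<Rightarrow> bool" where
  "riesz_Q sc \<longleftrightarrow>
     (\<forall>q x y. sc q (x + y) = sc q x + sc q y) \<and>
     (\<forall>p q x. sc (p + q) x = sc p x + sc q x) \<and>
     (\<forall>p q x. sc (p * q) x = sc p (sc q x)) \<and>
     (\<forall>x. sc 1 x = x) \<and>
     (\<forall>q x. 0 \<le> q \<longrightarrow> 0 \<le> x \<longrightarrow> 0 \<le> sc q x)"

text \<open>Strong unit u; the rational q is identified with sc q u.\<close>
definition strong_unit :: "(rat \<Rightarrow> 'a::lattice_ab_group_add \<Rightarrow> 'a) \<Rightarrow> 'a \<Rightarrow> bool" where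
  "strong_unit sc u \<longleftrightarrow> 0 \<le> u \<and> (\<forall>x. \<exists>n::nat. sup x (- x) \<le> sc (of_nat n) u)"

text \<open>D satisfies the defining relations of Spec(R) in the bounded
  distributive lattice L.\<close>
definition spec_relations ::
  "(rat \<Rightarrow> 'a::lattice_ab_group_add \<Rightarrow> 'a) \<Rightarrow> 'a \<Rightarrow> ('a \<Rightarrow> 'l::{distrib_lattice,bounded_lattice}) \<Rightarrow> bool" where
  "spec_relations sc u D \<longleftrightarrow>
     D u = top \<and>
     (\<forall>a. inf (D a) (D (- a)) = bot) \<and>
     (\<forall>a b. D (a + b) \<le> sup (D a) (D b)) \<and>
     (\<forall>a. a \<le> 0 \<longrightarrow> D a = bot) \<and>
     (\<forall>a b. D (sup a b) = sup (D a) (D b))"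

definition lower_real :: "rat set \<Rightarrow> bool" where
  "lower_real A \<longleftrightarrow> A \<noteq> {} \<and> (\<forall>p q. q \<in> A \<longrightarrow> p < q \<longrightarrow> p \<in> A) \<and> (\<forall>q\<in>A. \<exists>p\<in>A. q < p)"

definition lr_of :: "rat \<Rightarrow> rat set" where
  "lr_of c = {q. q < c}"

definition lr_add :: "rat set \<Rightarrow> rat set \<Rightarrow> rat set" where
  "lr_add A B = {a + b | a b. a \<in> A \<and> b \<in> B}"

text \<open>Valuation on the lattice with values in nonnegative lower reals
  (order on lower reals = inclusion, sup = union).\<close>
definition valuation ::
  "(rat \<Rightarrow> 'a::lattice_ab_group_add \<Rightarrow> 'a) \<Rightarrow> 'a \<Rightarrow> ('a \<Rightarrow> 'l::{distrib_lattice,bounded_lattice})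
     \<Rightarrow> ('l \<Rightarrow> rat set) \<Rightarrow> bool" where
  "valuation sc u D \<mu> \<longleftrightarrow>
     (\<forall>x. lower_real (\<mu> x) \<and> lr_of 0 \<subseteq> \<mu> x) \<and>
     \<mu> bot = lr_of 0 \<and> \<mu> top = lr_of 1 \<and>
     (\<forall>x y. lr_add (\<mu> x) (\<mu> y) = lr_add (\<mu> (sup x y)) (\<mu> (inf x y))) \<and>
     (\<forall>x y. x \<le> y \<longrightarrow> \<mu> x \<subseteq> \<mu> y) \<and>
     (\<forall>a. \<mu> (D a) \<subseteq> (\<Union>\<epsilon>\<in>{\<epsilon>::rat. 0 < \<epsilon>}. \<mu> (D (a - sc \<epsilon> u))))"

text \<open>"Delta[r,s] < q": q lies in the upper real 1 - mu(D(r-f)) - mu(D(f-s)).\<close>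
definition Delta_closed_lt ::
  "(rat \<Rightarrow> 'a::lattice_ab_group_add \<Rightarrow> 'a) \<Rightarrow> 'a \<Rightarrow> ('a \<Rightarrow> 'l::{distrib_lattice,bounded_lattice})
     \<Rightarrow> ('l \<Rightarrow> rat set) \<Rightarrow> 'a \<Rightarrow> rat \<Rightarrow> rat \<Rightarrow> rat \<Rightarrow> bool" where
  "Delta_closed_lt sc u D \<mu> f r s q \<longleftrightarrow>
     (\<exists>a b. a \<in> \<mu> (D (sc r u - f)) \<and> b \<in> \<mu> (D (f - sc s u)) \<and> 1 - a - b < q)"

end

theory Submission
  imports Defs
begin

text \<open>
  For rationals t < t' the "level band" D(f - t) \<and> D(t' - f) carves out
  the part of the spectrum where t < f < t'.  Subdivide [r, s] into M = 2N + 1 equal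
  pieces t_0 < ... < t_M.  Consecutive bands are disjoint from the part below them,
  so by modularity of the valuation their masses add up, and since the total mass is
  1 some band has mass at most q = 1/(2N) (pigeonhole, lemma thin_band_exists).
  Shrinking that piece slightly to [r', s'], the three elements D(r' - f), D(f - s')
  and the thin band cover the top element (lemma cover_by_band), hence by
  subadditivity 1 - mu(D(r' - f)) - mu(D(f - s')) < 2q = 1/N (lemma
  Delta_small_near_thin_band).
\<close>

lemma sc_add_scalar: "riesz_Q sc \<Longrightarrow> sc (p + q) x = sc p x + sc q x"
  unfolding riesz_Q_def by blast

lemma sc_zero: assumes "riesz_Q sc" shows "sc 0 x = 0"
  using sc_add_scalar[OF assms, of 0 0 x] by simp

lemma sc_mono:
  assumes "riesz_Q sc" "0 \<le> u" "(a::rat) \<le> b" shows "sc a u \<le> sc b u"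
proof -
  have "sc b u = sc a u + sc (b - a) u"
    using sc_add_scalar[OF assms(1), of a "b - a" u] by simp
  moreover have "0 \<le> sc (b - a) u" using assms unfolding riesz_Q_def by simp
  ultimately show ?thesis by (simp add: add_increasing2)
qed

lemma D_mono: assumes "spec_relations sc u D" "a \<le> b" shows "D a \<le> D b"
proof -
  have "D b = sup (D a) (D b)"
    using assms unfolding spec_relations_def by (metis sup_absorb2)
  then show ?thesis by (metis sup.cobounded1)
qed

lemma D_nat_multiple:
  assumes R: "riesz_Q sc" and S: "spec_relations sc u D"
  shows "D (sc (of_nat n) x) \<le> D x"
proof (induction n)
  case 0
  then show ?case using S sc_zero[OF R] unfolding spec_relations_def by simp
next
  case (Suc n)
  have "sc (of_nat (Suc n)) x = sc (of_nat n) x + x"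
    using sc_add_scalar[OF R, of 1 "of_nat n" x] R unfolding riesz_Q_def
    by (simp add: add.commute)
  then have "D (sc (of_nat (Suc n)) x) \<le> sup (D (sc (of_nat n) x)) (D x)"
    using S unfolding spec_relations_def by metis
  then show ?case using Suc by (meson le_supI order_trans order_refl)
qed

text \<open>Every positive rational c, viewed as c \<cdot> 1, has full support:
  some multiple n c dominates 1 and D(1) = top.\<close>
lemma D_positive_rational:
  assumes R: "riesz_Q sc" and S: "spec_relations sc u D" and u0: "0 \<le> u"
    and c0: "(0::rat) < c"
  shows "D (sc c u) = top"
proof -
  obtain n :: nat where "1 / c \<le> of_nat n" by (meson real_arch_simple)
  then have "sc 1 u \<le> sc (of_nat n * c) u"
    using sc_mono[OF R u0] c0 by (simp add: field_simps)
  then have "u \<le> sc (of_nat n) (sc c u)"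
    using R unfolding riesz_Q_def by simp
  then have "D u \<le> D (sc c u)"
    using D_mono[OF S] D_nat_multiple[OF R S, of n "sc c u"] order_trans by blast
  then show ?thesis using S unfolding spec_relations_def by (simp add: top_unique)
qed

lemma D_levels_cover:
  assumes R: "riesz_Q sc" and S: "spec_relations sc u D" and u0: "0 \<le> u"
    and tt': "(t::rat) < t'"
  shows "sup (D (sc t' u - f)) (D (f - sc t u)) = top"
proof -
  have "sc (t' - t) u = (sc t' u - f) + (f - sc t u)"
    using sc_add_scalar[OF R, of t "t' - t" u] by (simp add: algebra_simps)
  then have "D (sc (t' - t) u) \<le> sup (D (sc t' u - f)) (D (f - sc t u))"
    using S unfolding spec_relations_def by metis
  then show ?thesis
    using D_positive_rational[OF R S u0, of "t' - t"] tt' by (simp add: top_unique)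
qed

lemma D_levels_disjoint:
  assumes "spec_relations sc u D" shows "inf (D (x - f)) (D (f - x)) = bot"
  using assms unfolding spec_relations_def by (metis minus_diff_eq)

text \<open>The band where t < f < t'; its mass is the open interval mass Delta(t, t').\<close>
definition level_band ::
  "(rat \<Rightarrow> 'a::lattice_ab_group_add \<Rightarrow> 'a) \<Rightarrow> 'a \<Rightarrow> ('a \<Rightarrow> 'l::{distrib_lattice,bounded_lattice})
     \<Rightarrow> 'a \<Rightarrow> rat \<Rightarrow> rat \<Rightarrow> 'l" where
  "level_band sc u D f t t' = inf (D (f - sc t u)) (D (sc t' u - f))"

lemma cover_by_meet:
  fixes a :: "'l::{distrib_lattice,bounded_lattice}"
  assumes "sup a b = top" "sup e c = top" shows "sup (sup a c) (inf b e) = top"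
proof -
  have "top = inf (sup a b) (sup e c)" using assms by simp
  also have "\<dots> \<le> sup (sup a c) (inf b e)"
    by (simp add: inf_sup_distrib1 inf_sup_distrib2 le_supI1 le_supI2
        inf.coboundedI1 inf.coboundedI2)
  finally show ?thesis by (simp add: top_unique)
qed

lemma cover_by_band:
  assumes R: "riesz_Q sc" and S: "spec_relations sc u D" and u0: "0 \<le> u"
    and "t < r'" "s' < t'"
  shows "sup (sup (D (sc r' u - f)) (D (f - sc s' u))) (level_band sc u D f t t') = top"
  unfolding level_band_def
  using cover_by_meet[OF D_levels_cover[OF R S u0, of t r' f] D_levels_cover[OF R S u0, of s' t' f]]
    assms(4,5) by simp

lemma val_lower_real: "valuation sc u D \<mu> \<Longrightarrow> lower_real (\<mu> x)"
  by (simp add: valuation_def)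

lemma val_nonneg: "valuation sc u D \<mu> \<Longrightarrow> lr_of 0 \<subseteq> \<mu> x"
  by (simp add: valuation_def)

lemma val_bot: "valuation sc u D \<mu> \<Longrightarrow> \<mu> bot = lr_of 0"
  by (simp add: valuation_def)

lemma val_top: "valuation sc u D \<mu> \<Longrightarrow> \<mu> top = lr_of 1"
  by (simp add: valuation_def)

lemma val_modular:
  "valuation sc u D \<mu> \<Longrightarrow> lr_add (\<mu> x) (\<mu> y) = lr_add (\<mu> (sup x y)) (\<mu> (inf x y))"
  by (simp add: valuation_def)

lemma val_mono: "valuation sc u D \<mu> \<Longrightarrow> x \<le> y \<Longrightarrow> \<mu> x \<subseteq> \<mu> y"
  by (simp add: valuation_def)

text \<open>Subadditivity: mu(X \<or> Y) \<le> mu X + mu Y (uses roundedness and nonnegativity).\<close>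
lemma val_subadditive:
  assumes V: "valuation sc u D \<mu>" shows "\<mu> (sup X Y) \<subseteq> lr_add (\<mu> X) (\<mu> Y)"
proof
  fix z assume "z \<in> \<mu> (sup X Y)"
  then obtain z' where z': "z' \<in> \<mu> (sup X Y)" "z < z'"
    using val_lower_real[OF V] unfolding lower_real_def by blast
  have "z - z' \<in> \<mu> (inf X Y)" using val_nonneg[OF V, of "inf X Y"] z'(2) unfolding lr_of_def by auto
  then have "z \<in> lr_add (\<mu> (sup X Y)) (\<mu> (inf X Y))"
    using z'(1) unfolding lr_add_def by force
  then show "z \<in> lr_add (\<mu> X) (\<mu> Y)" using val_modular[OF V] by simp
qed

lemma val_disjoint_additive:
  assumes V: "valuation sc u D \<mu>" and disj: "inf X Y = bot"
  shows "lr_add (\<mu> X) (\<mu> Y) \<subseteq> \<mu> (sup X Y)"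
proof
  fix z assume "z \<in> lr_add (\<mu> X) (\<mu> Y)"
  then have "z \<in> lr_add (\<mu> (sup X Y)) (lr_of 0)"
    using val_modular[OF V, of X Y] val_bot[OF V] disj by simp
  then obtain a b where "z = a + b" "a \<in> \<mu> (sup X Y)" "b < 0"
    unfolding lr_add_def lr_of_def by auto
  then show "z \<in> \<mu> (sup X Y)" using val_lower_real[OF V] unfolding lower_real_def by auto
qed

lemma val_upper_bound:
  assumes V: "valuation sc u D \<mu>" and "q \<notin> \<mu> X" "e \<in> \<mu> X" shows "e < q"
  using val_lower_real[OF V, of X] assms(2,3) unfolding lower_real_def
  by (metis not_less_iff_gr_or_eq)

lemma bands_accumulate:
  assumes R: "riesz_Q sc" and S: "spec_relations sc u D" and V: "valuation sc u D \<mu>"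
    and u0: "0 \<le> u" and T: "\<And>i. (T::nat \<Rightarrow> rat) i \<le> T (Suc i)"
    and thick: "\<And>i. i < k \<Longrightarrow> q \<in> \<mu> (level_band sc u D f (T i) (T (Suc i)))"
  shows "\<exists>X. X \<le> D (sc (T k) u - f) \<and> lr_of (of_nat k * q) \<subseteq> \<mu> X"
  using thick
proof (induction k)
  case 0
  then show ?case using val_bot[OF V] by (intro exI[of _ bot]) simp
next
  case (Suc k)
  let ?B = "level_band sc u D f (T k) (T (Suc k))"
  obtain X where X: "X \<le> D (sc (T k) u - f)" "lr_of (of_nat k * q) \<subseteq> \<mu> X"
    using Suc by auto
  have "D (sc (T k) u - f) \<le> D (sc (T (Suc k)) u - f)"
    using D_mono[OF S] sc_mono[OF R u0 T[of k]] by (simp add: diff_right_mono)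
  then have below: "sup X ?B \<le> D (sc (T (Suc k)) u - f)"
    using X(1) unfolding level_band_def by (meson inf.coboundedI2 le_supI order_trans order_refl)
  have "inf X ?B \<le> inf (D (sc (T k) u - f)) (D (f - sc (T k) u))"
    using X(1) unfolding level_band_def by (meson inf.coboundedI1 inf_mono order_refl)
  then have disj: "inf X ?B = bot" using D_levels_disjoint[OF S] by (simp add: bot_unique)
  have "lr_of (of_nat (Suc k) * q) \<subseteq> lr_add (\<mu> X) (\<mu> ?B)"
  proof
    fix x assume "x \<in> lr_of (of_nat (Suc k) * q)"
    then have "x - q \<in> \<mu> X" using X(2) unfolding lr_of_def by (auto simp: algebra_simps)
    then show "x \<in> lr_add (\<mu> X) (\<mu> ?B)"
      using Suc.prems[of k] unfolding lr_add_def by force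
  qed
  then show ?case using below val_disjoint_additive[OF V disj] by blast
qed

lemma thin_band_exists:
  assumes R: "riesz_Q sc" and S: "spec_relations sc u D" and V: "valuation sc u D \<mu>"
    and u0: "0 \<le> u" and T: "\<And>i. (T::nat \<Rightarrow> rat) i \<le> T (Suc i)"
    and M: "1 < of_nat M * q"
  shows "\<exists>i<M. q \<notin> \<mu> (level_band sc u D f (T i) (T (Suc i)))"
proof (rule ccontr)
  assume "\<not> ?thesis"
  then obtain X where "lr_of (of_nat M * q) \<subseteq> \<mu> X"
    using bands_accumulate[of sc u D \<mu> T M q f, OF R S V u0 T] by auto
  moreover have "\<mu> X \<subseteq> lr_of 1" using val_mono[OF V top_greatest] val_top[OF V] by simp
  ultimately show False using M unfolding lr_of_def by auto
qed

lemma Delta_small_near_thin_band: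
  assumes R: "riesz_Q sc" and S: "spec_relations sc u D" and V: "valuation sc u D \<mu>"
    and u0: "0 \<le> u" and "t < r'" "s' < t'"
    and thin: "q \<notin> \<mu> (level_band sc u D f t t')" and \<epsilon>: "0 < \<epsilon>"
  shows "Delta_closed_lt sc u D \<mu> f r' s' (q + \<epsilon>)"
proof -
  let ?A = "D (sc r' u - f)" and ?C = "D (f - sc s' u)" and ?B = "level_band sc u D f t t'"
  have "1 - \<epsilon> \<in> \<mu> (sup (sup ?A ?C) ?B)"
    using cover_by_band[OF R S u0 assms(5,6)] val_top[OF V] \<epsilon> unfolding lr_of_def by simp
  then obtain w e where we: "1 - \<epsilon> = w + e" "w \<in> \<mu> (sup ?A ?C)" "e \<in> \<mu> ?B"
    using val_subadditive[OF V] unfolding lr_add_def by blast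
  obtain a c where ac: "w = a + c" "a \<in> \<mu> ?A" "c \<in> \<mu> ?C"
    using val_subadditive[OF V] we(2) unfolding lr_add_def by blast
  have "e < q" using val_upper_bound[OF V thin we(3)] .
  then have "1 - a - c < q + \<epsilon>" using we(1) ac(1) by linarith
  then show ?thesis unfolding Delta_closed_lt_def using ac by blast
qed

theorem theorem4p12:
  fixes sc :: "rat \<Rightarrow> 'a::lattice_ab_group_add \<Rightarrow> 'a"
    and u :: 'a
    and D :: "'a \<Rightarrow> 'l::{distrib_lattice,bounded_lattice}"
    and \<mu> :: "'l \<Rightarrow> rat set"
    and f :: 'a
  assumes "riesz_Q sc"
    and "strong_unit sc u"
    and "spec_relations sc u D"
    and "valuation sc u D \<mu>"
    and "0 \<le> f"
  shows "\<forall>N::nat. N \<ge> 1 \<longrightarrow> (\<forall>r s::rat. r < s \<longrightarrow>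
           (\<exists>r' s'. r < r' \<and> r' < s' \<and> s' < s \<and>
              Delta_closed_lt sc u D \<mu> f r' s' (1 / of_nat N)))"
proof (intro allI impI)
  fix N :: nat and r s :: rat
  assume N: "N \<ge> 1" and rs: "r < s"
  have u0: "0 \<le> u" using assms(2) unfolding strong_unit_def by auto
  define M :: nat where "M = 2 * N + 1"
  define d where "d = (s - r) / of_nat M"
  define T where "T = (\<lambda>i::nat. r + of_nat i * d)"
  define q :: rat where "q = 1 / (2 * of_nat N)"
  have d0: "0 < d" using rs unfolding d_def M_def by simp
  have q0: "0 < q" and qq: "q + q = 1 / of_nat N" using N unfolding q_def by simp_all
  have T_mono: "T i \<le> T (Suc i)" for i using d0 unfolding T_def by (simp add: algebra_simps)
  have "1 < of_nat M * q" using N unfolding M_def q_def by (simp add: field_simps)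
  then obtain i where i: "i < M" and thin: "q \<notin> \<mu> (level_band sc u D f (T i) (T (Suc i)))"
    using thin_band_exists[of sc u D \<mu> T M q f, OF assms(1,3,4) u0 T_mono] by blast
  have "T (Suc i) \<le> T M" unfolding T_def using i d0 by (simp add: mult_right_mono)
  moreover have "T M = s" unfolding T_def d_def M_def by simp
  ultimately have "r < T i + d/4" "T i + d/4 < T (Suc i) - d/4" "T (Suc i) - d/4 < s"
    using d0 unfolding T_def by (simp_all add: algebra_simps add_nonneg_pos)
  moreover have "Delta_closed_lt sc u D \<mu> f (T i + d/4) (T (Suc i) - d/4) (1 / of_nat N)"
    using Delta_small_near_thin_band[OF assms(1,3,4) u0 _ _ thin q0] d0 qq by simp
  ultimately show "\<exists>r' s'. r < r' \<and> r' < s' \<and> s' < s \<and>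
      Delta_closed_lt sc u D \<mu> f r' s' (1 / of_nat N)" by blast
qed

end
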